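(* Let $v \in \mathbb{R}$ and $x > 0$, and for $t \ge 0$ define $$f_{v,x}(t) = \cosh(vt)\,\exp(-x\cosh t), \qquad g_{v,x}(t) = \log f_{v,x}(t) = \log\cosh(vt) - x\cosh t .$$ Then: (i) if $v^2 \le x$, the function $g_{v,x}$ is monotonically decreasing on $[0,\infty)$, so its maximum on $[0,\infty)$ is attained at $t_p = 0$; (ii) if $v^2 > x$, the function $g_{v,x}$ has exactly one peak on $[0,\infty)$: there is a unique $t_p > 0$ with $g'_{v,x}(t_p) = 0$, and $g'_{v,x}(t) > 0$ for $0 < t < t_p$ and $g'_{v,x}(t) < 0$ for $t > t_p$. Moreover, in either case, letting $t_p$ be the maximizer of $f_{v,x}$ on $[0,\infty)$, for every $\epsilon \in (0,1)$ the set $\{t \ge 0 : f_{v,x}(t) \ge \epsilon\, f_{v,x}(t_p)\}$ is a single closed bounded interval $[t_0, t_1]$ with $0 \le t_0 \le t_p \le t_1$.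
   Context: These functions arise from the integral representation $K_v(x) = \int_0^\infty f_{v,x}(t)\,dt$ of the modified Bessel function of the second kind, so the variable $t$ ranges over $[0,\infty)$. *)

theory Defs
  imports "HOL-Analysis.Analysis"
begin

text \<open>Integrand of K_v(x) and its logarithm, as functions of t (t >= 0).\<close>
definition fK :: "real \<Rightarrow> real \<Rightarrow> real \<Rightarrow> real" where
  "fK v x t = cosh (v * t) * exp (- x * cosh t)"

definition gK :: "real \<Rightarrow> real \<Rightarrow> real \<Rightarrow> real" where
  "gK v x t = ln (cosh (v * t)) - x * cosh t"

end

theory Submission
  imports Defs "HOL-Real_Asymp.Real_Asymp"
begin

(*
  With h(t) = v tanh(vt) / sinh t (the constant hK below) the derivative of g factors as
  g'(t) = v tanh(vt) - x sinh t = sinh t (h(t) - x). For v \<noteq> 0,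
  h(t) = v\<^sup>2 (tanh(|v|t) / (|v|t)) (t / sinh t) is a product of two positive, strictly
  decreasing factors, and h falls from v\<^sup>2 (as t \<rightarrow> 0+) to 0 (as t \<rightarrow> \<infinity>).
  So g' \<le> 0 on [0, \<infinity>) when v\<^sup>2 \<le> x, while for v\<^sup>2 > x the derivative changes sign
  exactly once, at the unique t_p with h(t_p) = x. In both cases g, and with it f = exp g, increases up to
  its peak and decreases afterwards. Since f is continuous and tends to 0, every superlevel
  set {t \<ge> 0. f t \<ge> c} with c > 0 is compact and connected, i.e. a closed interval.
*)

lemma sinh_gt_self:
  fixes y :: real
  assumes "0 < y"
  shows "y < sinh y"
proof -
  have "(\<lambda>u. sinh u - u) 0 < (\<lambda>u. sinh u - u) y"
  proof (rule DERIV_pos_imp_increasing_open[OF assms])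
    fix u :: real
    assume "0 < u"
    then have "cosh u \<noteq> 1"
      by simp
    then have "1 < cosh u"
      using cosh_real_ge_1[of u] by linarith
    then show "\<exists>d. ((\<lambda>u. sinh u - u) has_real_derivative d) (at u) \<and> d > 0"
      by (intro exI[of _ "cosh u - 1"]) (auto intro!: derivative_eq_intros)
  qed (intro continuous_intros)
  then show ?thesis
    by simp
qed

lemma sinh_lt_mult_cosh:
  fixes t :: real
  assumes "0 < t"
  shows "sinh t < t * cosh t"
proof -
  have "(\<lambda>u. u * cosh u - sinh u) 0 < (\<lambda>u. u * cosh u - sinh u) t"
  proof (rule DERIV_pos_imp_increasing_open[OF assms])
    fix u :: real
    assume "0 < u"
    then show "\<exists>d. ((\<lambda>u. u * cosh u - sinh u) has_real_derivative d) (at u) \<and> d > 0"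
      by (intro exI[of _ "u * sinh u"]) (auto intro!: derivative_eq_intros)
  qed (intro continuous_intros)
  then show ?thesis
    by simp
qed

lemma tanh_lt_self:
  fixes u :: real
  assumes "0 < u"
  shows "tanh u < u"
  using sinh_lt_mult_cosh[OF assms] by (simp add: tanh_def divide_less_eq)

lemma tanh_div_self_strict_decreasing:
  fixes s t :: real
  assumes "0 < s" "s < t"
  shows "tanh t / t < tanh s / s"
proof -
  have "(\<lambda>u. tanh u / u) t < (\<lambda>u. tanh u / u) s"
  proof (rule DERIV_neg_imp_decreasing_open[OF assms(2)])
    fix u :: real
    assume "s < u"
    then have u: "0 < u"
      using assms by simp
    have "((\<lambda>u. tanh u / u) has_real_derivative
            ((1 - tanh u ^ 2) * u - tanh u) / u ^ 2) (at u)"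
      using u by (auto intro!: derivative_eq_intros simp: power2_eq_square)
    moreover have "(1 - tanh u ^ 2) * u - tanh u = (u - sinh u * cosh u) / cosh u ^ 2"
    proof -
      have sech: "1 - tanh u ^ 2 = 1 / cosh u ^ 2"
        by (simp add: tanh_def field_simps) (simp add: cosh_square_eq)
      show ?thesis
        unfolding sech by (simp add: tanh_def field_simps power2_eq_square)
    qed
    moreover have "u < sinh u * cosh u"
      using sinh_gt_self[of "2 * u"] u by (simp add: sinh_double)
    ultimately show "\<exists>d. ((\<lambda>u. tanh u / u) has_real_derivative d) (at u) \<and> d < 0"
      using u by (intro exI) (auto simp: divide_neg_pos)
  qed (use assms in \<open>intro continuous_intros; auto\<close>)
  then show ?thesis
    by simp
qed

lemma self_div_sinh_strict_decreasing:
  fixes s t :: real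
  assumes "0 < s" "s < t"
  shows "t / sinh t < s / sinh s"
proof -
  have "(\<lambda>u. u / sinh u) t < (\<lambda>u. u / sinh u) s"
  proof (rule DERIV_neg_imp_decreasing_open[OF assms(2)])
    fix u :: real
    assume "s < u"
    then have u: "0 < u"
      using assms by simp
    have "((\<lambda>u. u / sinh u) has_real_derivative (sinh u - u * cosh u) / sinh u ^ 2) (at u)"
      using u by (auto intro!: derivative_eq_intros simp: power2_eq_square)
    moreover have "sinh u - u * cosh u < 0"
      using sinh_lt_mult_cosh[OF u] by simp
    ultimately show "\<exists>d. ((\<lambda>u. u / sinh u) has_real_derivative d) (at u) \<and> d < 0"
      using u by (intro exI) (auto simp: divide_neg_pos)
  qed (use assms in \<open>intro continuous_intros; auto\<close>)
  then show ?thesis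
    by simp
qed

lemma strictly_decreasing_crossing:
  fixes h :: "real \<Rightarrow> real"
  assumes cont: "continuous_on {0<..} h"
    and dec: "\<And>s t. 0 < s \<Longrightarrow> s < t \<Longrightarrow> h t < h s"
    and lim_0: "(h \<longlongrightarrow> a) (at_right 0)" and lim_top: "(h \<longlongrightarrow> b) at_top"
    and "b < c" "c < a"
  obtains tp where "0 < tp" "h tp = c"
    "\<And>t. 0 < t \<Longrightarrow> t < tp \<Longrightarrow> c < h t" "\<And>t. tp < t \<Longrightarrow> h t < c"
proof -
  obtain r where "0 < r" and above: "\<And>t. 0 < t \<Longrightarrow> t < r \<Longrightarrow> c < h t"
    using order_tendstoD(1)[OF lim_0 \<open>c < a\<close>] by (auto simp: eventually_at_right_field)
  define t1 where "t1 = r / 2"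
  have "0 < t1" "c < h t1"
    using \<open>0 < r\<close> above unfolding t1_def by auto
  obtain N where below: "\<And>t. N \<le> t \<Longrightarrow> h t < c"
    using order_tendstoD(2)[OF lim_top \<open>b < c\<close>] by (auto simp: eventually_at_top_linorder)
  define t2 where "t2 = max N t1"
  have "t1 \<le> t2" "h t2 < c"
    using below unfolding t2_def by auto
  moreover have "continuous_on {t1..t2} h"
    by (rule continuous_on_subset[OF cont]) (use \<open>0 < t1\<close> in auto)
  ultimately obtain tp where "t1 \<le> tp" "h tp = c"
    using IVT2'[of h t2 c t1] \<open>c < h t1\<close> by auto
  moreover have "0 < tp"
    using \<open>0 < t1\<close> \<open>t1 \<le> tp\<close> by simp
  ultimately show ?thesis
    using dec by (intro that) auto
qed

lemma is_interval_superlevel_set_unimodal: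
  fixes f :: "real \<Rightarrow> real"
  assumes up: "\<And>s t. a \<le> s \<Longrightarrow> s \<le> t \<Longrightarrow> t \<le> m \<Longrightarrow> f s \<le> f t"
    and down: "\<And>s t. m \<le> s \<Longrightarrow> s \<le> t \<Longrightarrow> f t \<le> f s"
  shows "is_interval {t. a \<le> t \<and> c \<le> f t}"
  unfolding is_interval_1
proof (intro ballI allI impI)
  fix s w u
  assume "s \<in> {t. a \<le> t \<and> c \<le> f t}" "w \<in> {t. a \<le> t \<and> c \<le> f t}" "s \<le> u \<and> u \<le> w"
  then have "a \<le> s" "c \<le> f s" "c \<le> f w" "s \<le> u" "u \<le> w"
    by auto
  moreover have "f s \<le> f u \<or> f w \<le> f u"
    using up[of s u] down[of u w] \<open>a \<le> s\<close> \<open>s \<le> u\<close> \<open>u \<le> w\<close> by (cases "u \<le> m") auto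
  ultimately show "u \<in> {t. a \<le> t \<and> c \<le> f t}"
    by auto
qed

lemma superlevel_set_unimodal:
  fixes f :: "real \<Rightarrow> real"
  assumes cont: "continuous_on {a..} f"
    and up: "\<And>s t. a \<le> s \<Longrightarrow> s \<le> t \<Longrightarrow> t \<le> m \<Longrightarrow> f s \<le> f t"
    and down: "\<And>s t. m \<le> s \<Longrightarrow> s \<le> t \<Longrightarrow> f t \<le> f s"
    and lim: "(f \<longlongrightarrow> l) at_top" and "l < c"
    and p: "a \<le> p" "c \<le> f p"
  shows "\<exists>t0 t1. a \<le> t0 \<and> t0 \<le> p \<and> p \<le> t1 \<and> {t. a \<le> t \<and> c \<le> f t} = {t0..t1}"
proof -
  define S where "S = {t. a \<le> t \<and> c \<le> f t}"
  have "is_interval S"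
    unfolding S_def using up down by (rule is_interval_superlevel_set_unimodal)
  obtain N where below: "\<And>t. N \<le> t \<Longrightarrow> f t < c"
    using order_tendstoD(2)[OF lim \<open>l < c\<close>] by (auto simp: eventually_at_top_linorder)
  have "S \<subseteq> {a..N}"
  proof
    fix t
    assume "t \<in> S"
    then have "a \<le> t" "\<not> f t < c"
      unfolding S_def by auto
    then show "t \<in> {a..N}"
      using below[of t] by (cases "N \<le> t") auto
  qed
  then have "bounded S"
    by (rule bounded_subset[OF bounded_closed_interval])
  moreover have "S = {a..} \<inter> f -` {c..}"
    unfolding S_def by auto
  then have "closed S"
    using continuous_closed_preimage[OF cont closed_atLeast closed_atLeast] by simp
  ultimately have "compact S"
    by (simp add: compact_eq_bounded_closed)
  then obtain t0 t1 where S: "S = {t0..t1}"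
    using \<open>is_interval S\<close> connected_compact_interval_1 is_interval_connected by blast
  have "p \<in> S"
    using p unfolding S_def by simp
  then have "t0 \<in> S" "t0 \<le> p" "p \<le> t1"
    unfolding S by auto
  then have "a \<le> t0"
    unfolding S_def by simp
  with \<open>t0 \<le> p\<close> \<open>p \<le> t1\<close> S show ?thesis
    unfolding S_def by blast
qed

definition hK :: "real \<Rightarrow> real \<Rightarrow> real" where
  "hK v t = v * tanh (v * t) / sinh t"

lemma hK_abs: "hK v t = \<bar>v\<bar> * tanh (\<bar>v\<bar> * t) / sinh t"
  unfolding hK_def by (cases "v \<ge> 0") auto

lemma hK_factor:
  assumes "v \<noteq> 0" "0 < t"
  shows "hK v t = v\<^sup>2 * (tanh (\<bar>v\<bar> * t) / (\<bar>v\<bar> * t)) * (t / sinh t)"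
  using assms unfolding hK_abs by (simp add: field_simps power2_eq_square)

lemma hK_strict_decreasing:
  assumes "v \<noteq> 0" "0 < s" "s < t"
  shows "hK v t < hK v s"
proof -
  have "tanh (\<bar>v\<bar> * t) / (\<bar>v\<bar> * t) < tanh (\<bar>v\<bar> * s) / (\<bar>v\<bar> * s)"
    using assms by (intro tanh_div_self_strict_decreasing) auto
  moreover have "t / sinh t < s / sinh s"
    using assms(2,3) by (rule self_div_sinh_strict_decreasing)
  moreover have "0 < tanh (\<bar>v\<bar> * t) / (\<bar>v\<bar> * t)" "0 < t / sinh t"
    using assms by auto
  ultimately have "v\<^sup>2 * ((tanh (\<bar>v\<bar> * t) / (\<bar>v\<bar> * t)) * (t / sinh t))
                 < v\<^sup>2 * ((tanh (\<bar>v\<bar> * s) / (\<bar>v\<bar> * s)) * (s / sinh s))"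
    using assms(1) by (intro mult_strict_left_mono mult_strict_mono) auto
  then show ?thesis
    using assms by (simp add: hK_factor mult.assoc)
qed

lemma hK_le_square:
  assumes "0 \<le> t"
  shows "hK v t \<le> v\<^sup>2"
proof (cases "v = 0 \<or> t = 0")
  case True
  then show ?thesis
    by (auto simp: hK_def)
next
  case False
  then have "v \<noteq> 0" "0 < t"
    using assms by auto
  have "tanh (\<bar>v\<bar> * t) / (\<bar>v\<bar> * t) \<le> 1"
    using tanh_lt_self[of "\<bar>v\<bar> * t"] \<open>v \<noteq> 0\<close> \<open>0 < t\<close> by simp
  moreover have "t / sinh t \<le> 1"
    using sinh_gt_self[OF \<open>0 < t\<close>] \<open>0 < t\<close> by (simp add: divide_le_eq_1)
  moreover have "0 \<le> t / sinh t"
    using \<open>0 < t\<close> by simp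
  ultimately have "(tanh (\<bar>v\<bar> * t) / (\<bar>v\<bar> * t)) * (t / sinh t) \<le> 1"
    by (metis mult_le_one)
  then have "v\<^sup>2 * ((tanh (\<bar>v\<bar> * t) / (\<bar>v\<bar> * t)) * (t / sinh t)) \<le> v\<^sup>2"
    by (rule mult_left_le) simp
  then show ?thesis
    using \<open>v \<noteq> 0\<close> \<open>0 < t\<close> by (simp add: hK_factor mult.assoc)
qed

lemma hK_tendsto_at_right_0:
  assumes "v \<noteq> 0"
  shows "(hK v \<longlongrightarrow> v\<^sup>2) (at_right 0)"
proof -
  have "((\<lambda>t. \<bar>v\<bar> * tanh (\<bar>v\<bar> * t) / sinh t) \<longlongrightarrow> \<bar>v\<bar> * \<bar>v\<bar>) (at_right 0)"
    using assms by real_asymp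
  then show ?thesis
    by (simp add: hK_abs[abs_def] power2_eq_square)
qed

lemma hK_tendsto_at_top:
  assumes "v \<noteq> 0"
  shows "(hK v \<longlongrightarrow> 0) at_top"
proof -
  have "((\<lambda>t. \<bar>v\<bar> * tanh (\<bar>v\<bar> * t) / sinh t) \<longlongrightarrow> 0) at_top"
    using assms by real_asymp
  then show ?thesis
    by (simp add: hK_abs[abs_def])
qed

lemma continuous_on_hK: "continuous_on {0<..} (hK v)"
  unfolding hK_def[abs_def] by (intro continuous_intros) auto

(* At t = 0 both sides vanish: hK v 0 = 0 is a division by zero. *)
lemma gK_has_real_derivative:
  "(gK v x has_real_derivative sinh t * (hK v t - x)) (at t)"
proof -
  have "(gK v x has_real_derivative v * tanh (v * t) - x * sinh t) (at t)"
    unfolding gK_def[abs_def] by (auto intro!: derivative_eq_intros simp: tanh_def)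
  moreover have "v * tanh (v * t) - x * sinh t = sinh t * (hK v t - x)"
    by (cases "t = 0") (auto simp: hK_def right_diff_distrib)
  ultimately show ?thesis
    by simp
qed

lemma deriv_gK: "deriv (gK v x) t = sinh t * (hK v t - x)"
  by (rule DERIV_imp_deriv[OF gK_has_real_derivative])

lemma deriv_gK_sign_change:
  assumes "0 < x" "x < v\<^sup>2"
  obtains tp where "0 < tp" "deriv (gK v x) tp = 0"
    "\<And>t. 0 < t \<Longrightarrow> t < tp \<Longrightarrow> deriv (gK v x) t > 0"
    "\<And>t. tp < t \<Longrightarrow> deriv (gK v x) t < 0"
proof -
  have "v \<noteq> 0"
    using assms by auto
  obtain tp where "0 < tp" "hK v tp = x"
    and "\<And>t. 0 < t \<Longrightarrow> t < tp \<Longrightarrow> x < hK v t" "\<And>t. tp < t \<Longrightarrow> hK v t < x"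
    using strictly_decreasing_crossing[OF continuous_on_hK hK_strict_decreasing[OF \<open>v \<noteq> 0\<close>]
        hK_tendsto_at_right_0[OF \<open>v \<noteq> 0\<close>] hK_tendsto_at_top[OF \<open>v \<noteq> 0\<close>] assms]
    by blast
  then show ?thesis
    by (intro that[of tp]) (auto simp: deriv_gK mult_pos_neg)
qed

lemma gK_single_peak:
  assumes "0 < x" "x < v\<^sup>2"
  shows "(\<exists>!tp. tp > 0 \<and> deriv (gK v x) tp = 0) \<and>
    (\<forall>tp. tp > 0 \<and> deriv (gK v x) tp = 0 \<longrightarrow>
       (\<forall>t. 0 < t \<and> t < tp \<longrightarrow> deriv (gK v x) t > 0) \<and>
       (\<forall>t. t > tp \<longrightarrow> deriv (gK v x) t < 0))"
proof -
  obtain tp where "0 < tp" "deriv (gK v x) tp = 0"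
    and pos: "\<And>t. 0 < t \<Longrightarrow> t < tp \<Longrightarrow> deriv (gK v x) t > 0"
    and neg: "\<And>t. tp < t \<Longrightarrow> deriv (gK v x) t < 0"
    using deriv_gK_sign_change[OF assms] by blast
  have unique: "t = tp" if "0 < t" "deriv (gK v x) t = 0" for t
    using pos[of t] neg[of t] that by (cases t tp rule: linorder_cases) auto
  show ?thesis
    using \<open>0 < tp\<close> \<open>deriv (gK v x) tp = 0\<close> pos neg unique by blast
qed

lemma gK_mono_if_deriv_nonneg:
  assumes "s \<le> t" "\<And>y. s \<le> y \<Longrightarrow> y \<le> t \<Longrightarrow> 0 \<le> deriv (gK v x) y"
  shows "gK v x s \<le> gK v x t"
  using assms(1)
proof (rule DERIV_nonneg_imp_nondecreasing)
  fix y
  assume "s \<le> y" "y \<le> t"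
  then show "\<exists>d. (gK v x has_real_derivative d) (at y) \<and> 0 \<le> d"
    using assms(2)[of y] gK_has_real_derivative[of v x y] by (auto simp: deriv_gK)
qed

lemma gK_antimono_if_deriv_nonpos:
  assumes "s \<le> t" "\<And>y. s \<le> y \<Longrightarrow> y \<le> t \<Longrightarrow> deriv (gK v x) y \<le> 0"
  shows "gK v x t \<le> gK v x s"
  using assms(1)
proof (rule DERIV_nonpos_imp_nonincreasing)
  fix y
  assume "s \<le> y" "y \<le> t"
  then show "\<exists>d. (gK v x has_real_derivative d) (at y) \<and> d \<le> 0"
    using assms(2)[of y] gK_has_real_derivative[of v x y] by (auto simp: deriv_gK)
qed

lemma gK_decreasing:
  assumes "v\<^sup>2 \<le> x" "0 \<le> s" "s \<le> t"
  shows "gK v x t \<le> gK v x s"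
  using assms(3)
proof (rule gK_antimono_if_deriv_nonpos)
  fix y
  assume "s \<le> y"
  then have "0 \<le> sinh y" "hK v y - x \<le> 0"
    using assms hK_le_square[of y v] by auto
  then show "deriv (gK v x) y \<le> 0"
    unfolding deriv_gK by (rule mult_nonneg_nonpos)
qed

lemma gK_unimodal:
  assumes "0 < x"
  obtains m where "0 \<le> m"
    "\<And>s t. 0 \<le> s \<Longrightarrow> s \<le> t \<Longrightarrow> t \<le> m \<Longrightarrow> gK v x s \<le> gK v x t"
    "\<And>s t. m \<le> s \<Longrightarrow> s \<le> t \<Longrightarrow> gK v x t \<le> gK v x s"
proof (cases "v\<^sup>2 \<le> x")
  case True
  show ?thesis
  proof (rule that[of 0])
    show "gK v x s \<le> gK v x t" if "0 \<le> s" "s \<le> t" "t \<le> 0" for s t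
      using that by (cases "s = t") auto
    show "gK v x t \<le> gK v x s" if "0 \<le> s" "s \<le> t" for s t
      using True that by (rule gK_decreasing)
  qed simp
next
  case False
  then obtain tp where "0 < tp" "deriv (gK v x) tp = 0"
    and pos: "\<And>t. 0 < t \<Longrightarrow> t < tp \<Longrightarrow> deriv (gK v x) t > 0"
    and neg: "\<And>t. tp < t \<Longrightarrow> deriv (gK v x) t < 0"
    using deriv_gK_sign_change[OF assms, of v] by (auto simp: not_le)
  have nonneg: "0 \<le> deriv (gK v x) y" if "0 \<le> y" "y \<le> tp" for y
    using that pos[of y] \<open>deriv (gK v x) tp = 0\<close>
    by (cases "y = 0 \<or> y = tp") (auto simp: deriv_gK)
  have nonpos: "deriv (gK v x) y \<le> 0" if "tp \<le> y" for y
    using that neg[of y] \<open>deriv (gK v x) tp = 0\<close> by (cases "y = tp") auto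
  show ?thesis
  proof (rule that[of tp])
    show "gK v x s \<le> gK v x t" if "0 \<le> s" "s \<le> t" "t \<le> tp" for s t
      using that(2) by (rule gK_mono_if_deriv_nonneg) (use that nonneg in auto)
    show "gK v x t \<le> gK v x s" if "tp \<le> s" "s \<le> t" for s t
      using that(2) by (rule gK_antimono_if_deriv_nonpos) (use that nonpos in auto)
  qed (use \<open>0 < tp\<close> in simp)
qed

lemma fK_eq_exp_gK: "fK v x t = exp (gK v x t)"
  by (simp add: fK_def gK_def exp_diff exp_minus field_simps)

lemma fK_tendsto_0:
  assumes "0 < x"
  shows "(fK v x \<longlongrightarrow> 0) at_top"
proof (cases "v = 0")
  case True
  show ?thesis
    unfolding True fK_def[abs_def] using assms by real_asymp
next
  case False
  then have "\<bar>v\<bar> > 0"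
    by simp
  then have "((\<lambda>t. cosh (\<bar>v\<bar> * t) * exp (- x * cosh t)) \<longlongrightarrow> 0) at_top"
    using assms by real_asymp
  moreover have "cosh (\<bar>v\<bar> * t) = cosh (v * t)" for t
    by (cases "v \<ge> 0") auto
  ultimately show ?thesis
    by (simp add: fK_def[abs_def])
qed

theorem mainTheorem1:
  fixes v x :: real
  assumes "x > 0"
  shows "(v\<^sup>2 \<le> x \<longrightarrow>
            (\<forall>s t. 0 \<le> s \<and> s \<le> t \<longrightarrow> gK v x t \<le> gK v x s) \<and>
            (\<forall>t\<ge>0. gK v x t \<le> gK v x 0))
       \<and> (v\<^sup>2 > x \<longrightarrow>
            (\<exists>!tp. tp > 0 \<and> deriv (gK v x) tp = 0) \<and>
            (\<forall>tp. tp > 0 \<and> deriv (gK v x) tp = 0 \<longrightarrow>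
               (\<forall>t. 0 < t \<and> t < tp \<longrightarrow> deriv (gK v x) t > 0) \<and>
               (\<forall>t. t > tp \<longrightarrow> deriv (gK v x) t < 0)))
       \<and> (\<exists>tp\<ge>0. \<forall>t\<ge>0. fK v x t \<le> fK v x tp)
       \<and> (\<forall>tp. tp \<ge> 0 \<and> (\<forall>t\<ge>0. fK v x t \<le> fK v x tp) \<longrightarrow>
            (\<forall>\<epsilon>. 0 < \<epsilon> \<and> \<epsilon> < 1 \<longrightarrow>
              (\<exists>t0 t1. 0 \<le> t0 \<and> t0 \<le> tp \<and> tp \<le> t1 \<and>
                 {t. t \<ge> 0 \<and> fK v x t \<ge> \<epsilon> * fK v x tp} = {t0..t1})))"
proof -
  obtain m where "0 \<le> m"
    and up: "\<And>s t. 0 \<le> s \<Longrightarrow> s \<le> t \<Longrightarrow> t \<le> m \<Longrightarrow> fK v x s \<le> fK v x t"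
    and down: "\<And>s t. m \<le> s \<Longrightarrow> s \<le> t \<Longrightarrow> fK v x t \<le> fK v x s"
    using gK_unimodal[OF assms, of v] by (metis exp_le_cancel_iff fK_eq_exp_gK)
  have "fK v x t \<le> fK v x m" if "0 \<le> t" for t
    using up[OF that] down[of m t] \<open>0 \<le> m\<close> by (cases "t \<le> m") auto
  moreover have "\<exists>t0 t1. 0 \<le> t0 \<and> t0 \<le> tp \<and> tp \<le> t1 \<and>
      {t. t \<ge> 0 \<and> fK v x t \<ge> \<epsilon> * fK v x tp} = {t0..t1}"
    if "0 \<le> tp" "0 < \<epsilon>" "\<epsilon> < 1" for tp \<epsilon>
  proof (rule superlevel_set_unimodal)
    show "continuous_on {0..} (fK v x)"
      unfolding fK_def[abs_def] by (intro continuous_intros)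
    show "\<And>s t. 0 \<le> s \<Longrightarrow> s \<le> t \<Longrightarrow> t \<le> m \<Longrightarrow> fK v x s \<le> fK v x t"
      by (rule up)
    show "\<And>s t. m \<le> s \<Longrightarrow> s \<le> t \<Longrightarrow> fK v x t \<le> fK v x s"
      by (rule down)
    show "(fK v x \<longlongrightarrow> 0) at_top"
      by (rule fK_tendsto_0[OF assms])
    show "0 < \<epsilon> * fK v x tp" "\<epsilon> * fK v x tp \<le> fK v x tp"
      using that by (simp_all add: fK_eq_exp_gK)
  qed fact
  ultimately show ?thesis
    using gK_decreasing gK_single_peak[OF assms] \<open>0 \<le> m\<close> by (auto simp: not_le)
qed

end
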